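(* Let $A=op\langle\{F_1=w_1,\dots,F_n=w_n\}\rangle\prec N$ be an aggregate and let $G$ be the formula $$\bigwedge_{I\subseteq\{1,\dots,n\}\,:\,op(\{w_i:i\in I\})\not\prec N}\Big(\big(\bigwedge_{i\in I}F_i\big)\to\big(\bigvee_{i\in\overline I}F_i\big)\Big),\qquad \overline I=\{1,\dots,n\}\setminus I.$$ If $A$ is monotone, then $G$ is strongly equivalent to $\bigwedge_{I\subseteq\{1,\dots,n\}:op(\{w_i:i\in I\})\not\prec N}\big(\bigvee_{i\in\overline I}F_i\big)$. If $A$ is antimonotone, then $G$ is strongly equivalent to $\bigwedge_{I\subseteq\{1,\dots,n\}:op(\{w_i:i\in I\})\not\prec N}\big(\neg\bigwedge_{i\in I}F_i\big)$.
   Context: Formulas with aggregates: atoms and $\bot$; combinations by $\wedge,\vee,\to$; and aggregates $op\langle\{F_1=w_1,\dots,F_n=w_n\}\rangle\prec N$ with $op$ a function from finite multisets of reals to $\mathbb R\cup\{\pm\infty\}$, $F_i$ formulas with aggregates, $w_i,N$ reals, $\prec$ a binary relation on reals ($\not\prec$ its negation). $\top:=\bot\to\bot$, $\neg F:=F\to\bot$; empty conjunction is $\top$, empty disjunction is $\bot$. $X$ satisfies the aggregate iff $op(W_X)\prec N$, $W_X$ the multiset of $w_i$ with $X\models F_i$. Reduct: $\bot^X=\bot$; $a^X=a$ if $a\in X$, else $\bot$; $(F\otimes G)^X=F^X\otimes G^X$ if $X\models F\otimes G$, else $\bot$; for an aggregate $A$, $A^X$ is $op\langle\{F_1^X=w_1,\dots,F_n^X=w_n\}\rangle\prec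 N$ if $X\models A$ and $\bot$ otherwise. $X$ is a stable model of a theory $\Gamma$ if $X\models\Gamma^X$ and no proper subset of $X$ satisfies $\Gamma^X$; two formulas are strongly equivalent if adding either of them to any theory yields the same stable models. The aggregate is monotone if for all sub-multisets $W_1\subseteq W_2\subseteq\{w_1,\dots,w_n\}$, $op(W_1)\prec N$ implies $op(W_2)\prec N$; antimonotone if for all $W_2\subseteq W_1\subseteq\{w_1,\dots,w_n\}$, $op(W_1)\prec N$ implies $op(W_2)\prec N$. *)

theory Defs
  imports Complex_Main "HOL-Library.Multiset" "HOL-Library.Extended_Real"
begin

text \<open>An aggregate  op<{F_1=w_1,...,F_n=w_n}> rel N  is  Agg op [(F_1,w_1),...,(F_n,w_n)] rel N.
  op maps finite multisets of reals to extended reals; the relation rel is taken on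
  extended reals (so that op(W) = +-infinity can be compared with the real N).\<close>
datatype 'a fml =
    Atom 'a
  | Bot
  | And "'a fml" "'a fml"
  | Or "'a fml" "'a fml"
  | Imp "'a fml" "'a fml"
  | Agg "real multiset \<Rightarrow> ereal" "('a fml \<times> real) list" "ereal \<Rightarrow> ereal \<Rightarrow> bool" real

definition Top :: "'a fml" where "Top = Imp Bot Bot"
definition Neg :: "'a fml \<Rightarrow> 'a fml" where "Neg F = Imp F Bot"

fun Conj :: "'a fml list \<Rightarrow> 'a fml" where
  "Conj [] = Top"
| "Conj [F] = F"
| "Conj (F # Fs) = And F (Conj Fs)"

fun Disj :: "'a fml list \<Rightarrow> 'a fml" where
  "Disj [] = Bot"
| "Disj [F] = F"
| "Disj (F # Fs) = Or F (Disj Fs)"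

fun sat :: "'a set \<Rightarrow> 'a fml \<Rightarrow> bool" where
  "sat X (Atom a) = (a \<in> X)"
| "sat X Bot = False"
| "sat X (And F G) = (sat X F \<and> sat X G)"
| "sat X (Or F G) = (sat X F \<or> sat X G)"
| "sat X (Imp F G) = (sat X F \<longrightarrow> sat X G)"
| "sat X (Agg op ps rel N) =
     rel (op (mset [snd p. p \<leftarrow> ps, sat X (fst p)])) (ereal N)"

fun reduct :: "'a set \<Rightarrow> 'a fml \<Rightarrow> 'a fml" where
  "reduct X (Atom a) = (if a \<in> X then Atom a else Bot)"
| "reduct X Bot = Bot"
| "reduct X (And F G) = (if sat X (And F G) then And (reduct X F) (reduct X G) else Bot)"
| "reduct X (Or F G) = (if sat X (Or F G) then Or (reduct X F) (reduct X G) else Bot)"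
| "reduct X (Imp F G) = (if sat X (Imp F G) then Imp (reduct X F) (reduct X G) else Bot)"
| "reduct X (Agg op ps rel N) =
     (if sat X (Agg op ps rel N)
      then Agg op [(reduct X (fst p), snd p). p \<leftarrow> ps] rel N else Bot)"

definition sat_theory :: "'a set \<Rightarrow> 'a fml set \<Rightarrow> bool" where
  "sat_theory X \<Gamma> = (\<forall>F\<in>\<Gamma>. sat X F)"

definition reduct_theory :: "'a set \<Rightarrow> 'a fml set \<Rightarrow> 'a fml set" where
  "reduct_theory X \<Gamma> = reduct X ` \<Gamma>"

definition stable_model :: "'a set \<Rightarrow> 'a fml set \<Rightarrow> bool" where
  "stable_model X \<Gamma> = (sat_theory X (reduct_theory X \<Gamma>) \<and>
     (\<forall>Y. Y \<subset> X \<longrightarrow> \<not> sat_theory Y (reduct_theory X \<Gamma>)))"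

definition strongly_equivalent :: "'a fml \<Rightarrow> 'a fml \<Rightarrow> bool" where
  "strongly_equivalent F G = (\<forall>\<Gamma>. \<forall>X. stable_model X (insert F \<Gamma>) = stable_model X (insert G \<Gamma>))"

definition agg_monotone :: "(real multiset \<Rightarrow> ereal) \<Rightarrow> ('a fml \<times> real) list \<Rightarrow> (ereal \<Rightarrow> ereal \<Rightarrow> bool) \<Rightarrow> real \<Rightarrow> bool" where
  "agg_monotone op ps rel N = (\<forall>W1 W2. W1 \<subseteq># W2 \<longrightarrow> W2 \<subseteq># mset (map snd ps) \<longrightarrow>
      rel (op W1) (ereal N) \<longrightarrow> rel (op W2) (ereal N))"

definition agg_antimonotone :: "(real multiset \<Rightarrow> ereal) \<Rightarrow> ('a fml \<times> real) list \<Rightarrow> (ereal \<Rightarrow> ereal \<Rightarrow> bool) \<Rightarrow> real \<Rightarrow> bool" where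
  "agg_antimonotone op ps rel N = (\<forall>W1 W2. W2 \<subseteq># W1 \<longrightarrow> W1 \<subseteq># mset (map snd ps) \<longrightarrow>
      rel (op W1) (ereal N) \<longrightarrow> rel (op W2) (ereal N))"

text \<open>Index sets I \<subseteq> {1..n} are represented as sublists of [0..<n] (positions in ps).
  bad_sets: those I with op({w_i : i in I}) not-rel N.\<close>
definition bad_sets :: "(real multiset \<Rightarrow> ereal) \<Rightarrow> ('a fml \<times> real) list \<Rightarrow> (ereal \<Rightarrow> ereal \<Rightarrow> bool) \<Rightarrow> real \<Rightarrow> nat list list" where
  "bad_sets op ps rel N =
     [I. I \<leftarrow> subseqs [0..<length ps], \<not> rel (op (mset (map (\<lambda>i. snd (ps ! i)) I))) (ereal N)]"

definition conj_in :: "('a fml \<times> real) list \<Rightarrow> nat list \<Rightarrow> 'a fml" where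
  "conj_in ps I = Conj (map (\<lambda>i. fst (ps ! i)) I)"

definition disj_out :: "('a fml \<times> real) list \<Rightarrow> nat list \<Rightarrow> 'a fml" where
  "disj_out ps I = Disj (map (\<lambda>i. fst (ps ! i)) (filter (\<lambda>i. i \<notin> set I) [0..<length ps]))"

definition G_formula :: "(real multiset \<Rightarrow> ereal) \<Rightarrow> ('a fml \<times> real) list \<Rightarrow> (ereal \<Rightarrow> ereal \<Rightarrow> bool) \<Rightarrow> real \<Rightarrow> 'a fml" where
  "G_formula op ps rel N = Conj [Imp (conj_in ps I) (disj_out ps I). I \<leftarrow> bad_sets op ps rel N]"

definition G_mono :: "(real multiset \<Rightarrow> ereal) \<Rightarrow> ('a fml \<times> real) list \<Rightarrow> (ereal \<Rightarrow> ereal \<Rightarrow> bool) \<Rightarrow> real \<Rightarrow> 'a fml" where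
  "G_mono op ps rel N = Conj [disj_out ps I. I \<leftarrow> bad_sets op ps rel N]"

definition G_anti :: "(real multiset \<Rightarrow> ereal) \<Rightarrow> ('a fml \<times> real) list \<Rightarrow> (ereal \<Rightarrow> ereal \<Rightarrow> bool) \<Rightarrow> real \<Rightarrow> 'a fml" where
  "G_anti op ps rel N = Conj [Neg (conj_in ps I). I \<leftarrow> bad_sets op ps rel N]"

end

theory Submission
  imports Defs
begin

text \<open>Let \<open>T\<^sub>X = {i. X \<Turnstile> F\<^sub>i}\<close> and \<open>T\<^sub>Y = {i. Y \<Turnstile> F\<^sub>i\<^sup>X}\<close>, and call an index set bad if its
  weights violate the aggregate. An implication of \<open>G\<close> fails exactly at the bad \<open>I\<close> equal to the
  set of true indices, so \<open>Y \<Turnstile> G\<^sup>X\<close> iff neither \<open>T\<^sub>X\<close> nor \<open>T\<^sub>Y\<close> is bad. For a monotone aggregate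
  the bad sets are closed under subsets, so a set is not bad iff it lies in no bad set; since
  \<open>T\<^sub>Y \<subseteq> T\<^sub>X\<close>, this is the reduct condition of the disjunctive formula. For an antimonotone
  aggregate they are closed under supersets, so a set is not bad iff it contains no bad set,
  the reduct condition of the negated conjunctions. Formulas whose reducts agree for all
  \<open>X\<close>, \<open>Y\<close> are strongly equivalent.\<close>

lemma downward_closed_family_not_iff:
  assumes "\<And>S T. T \<subseteq> S \<Longrightarrow> S \<subseteq> U \<Longrightarrow> B S \<Longrightarrow> B T" and "T \<subseteq> U"
  shows "\<not> B T \<longleftrightarrow> (\<forall>S \<subseteq> U. B S \<longrightarrow> \<not> T \<subseteq> S)"
  using assms by blast

lemma upward_closed_family_not_iff:
  assumes "\<And>S T. S \<subseteq> T \<Longrightarrow> T \<subseteq> U \<Longrightarrow> B S \<Longrightarrow> B T" and "T \<subseteq> U"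
  shows "\<not> B T \<longleftrightarrow> (\<forall>S \<subseteq> U. B S \<longrightarrow> \<not> S \<subseteq> T)"
  using assms by blast

lemma sat_of_sat_reduct: "sat Y (reduct X F) \<Longrightarrow> sat X F"
  by (cases F) (auto split: if_splits)

lemma sat_Conj: "sat X (Conj Fs) \<longleftrightarrow> (\<forall>F\<in>set Fs. sat X F)"
  by (induction Fs rule: Conj.induct) (auto simp: Top_def)

lemma sat_Disj: "sat X (Disj Fs) \<longleftrightarrow> (\<exists>F\<in>set Fs. sat X F)"
  by (induction Fs rule: Disj.induct) auto

lemma sat_reduct_Conj: "sat Y (reduct X (Conj Fs)) \<longleftrightarrow> (\<forall>F\<in>set Fs. sat Y (reduct X F))"
  by (induction Fs rule: Conj.induct) (auto simp: Top_def dest: sat_of_sat_reduct)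

lemma sat_reduct_Disj: "sat Y (reduct X (Disj Fs)) \<longleftrightarrow> (\<exists>F\<in>set Fs. sat Y (reduct X F))"
  by (induction Fs rule: Disj.induct) (auto dest: sat_of_sat_reduct)

lemma strongly_equivalentI:
  assumes "\<And>X Y. sat Y (reduct X F) \<longleftrightarrow> sat Y (reduct X G)"
  shows "strongly_equivalent F G"
  using assms
  by (simp add: strongly_equivalent_def stable_model_def sat_theory_def reduct_theory_def)

definition true_indices :: "('a fml \<Rightarrow> bool) \<Rightarrow> ('a fml \<times> real) list \<Rightarrow> nat set" where
  "true_indices v ps = {i. i < length ps \<and> v (fst (ps ! i))}"

lemma sat_conj_in:
  "set I \<subseteq> {0..<length ps} \<Longrightarrow> sat X (conj_in ps I) \<longleftrightarrow> set I \<subseteq> true_indices (sat X) ps"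
  by (auto simp: conj_in_def true_indices_def sat_Conj)

lemma sat_reduct_conj_in:
  "set I \<subseteq> {0..<length ps} \<Longrightarrow>
    sat Y (reduct X (conj_in ps I)) \<longleftrightarrow> set I \<subseteq> true_indices (\<lambda>F. sat Y (reduct X F)) ps"
  by (auto simp: conj_in_def true_indices_def sat_reduct_Conj)

lemma sat_disj_out: "sat X (disj_out ps I) \<longleftrightarrow> \<not> true_indices (sat X) ps \<subseteq> set I"
  by (auto simp: disj_out_def true_indices_def sat_Disj)

lemma sat_reduct_disj_out:
  "sat Y (reduct X (disj_out ps I)) \<longleftrightarrow> \<not> true_indices (\<lambda>F. sat Y (reduct X F)) ps \<subseteq> set I"
  by (auto simp: disj_out_def true_indices_def sat_reduct_Disj)

lemma true_indices_subset: "true_indices v ps \<subseteq> {0..<length ps}"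
  by (auto simp: true_indices_def)

lemma true_indices_reduct_subset:
  "true_indices (\<lambda>F. sat Y (reduct X F)) ps \<subseteq> true_indices (sat X) ps"
  by (auto simp: true_indices_def dest: sat_of_sat_reduct)

definition weights :: "('a fml \<times> real) list \<Rightarrow> nat set \<Rightarrow> real multiset" where
  "weights ps S = image_mset (\<lambda>i. snd (ps ! i)) (mset_set S)"

definition bad_index_set :: "(real multiset \<Rightarrow> ereal) \<Rightarrow> ('a fml \<times> real) list \<Rightarrow>
    (ereal \<Rightarrow> ereal \<Rightarrow> bool) \<Rightarrow> real \<Rightarrow> nat set \<Rightarrow> bool" where
  "bad_index_set op ps rel N S \<longleftrightarrow> \<not> rel (op (weights ps S)) (ereal N)"

lemma weights_mono: "T \<subseteq> S \<Longrightarrow> finite S \<Longrightarrow> weights ps T \<subseteq># weights ps S"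
  by (simp add: weights_def image_mset_subseteq_mono rev_finite_subset)

lemma weights_all_indices: "weights ps {0..<length ps} = mset (map snd ps)"
proof -
  have "map snd ps = map (\<lambda>i. snd (ps ! i)) [0..<length ps]"
    by (rule nth_equalityI) auto
  then show ?thesis
    by (simp add: weights_def)
qed

lemma set_bad_sets:
  "set ` set (bad_sets op ps rel N) = {S. S \<subseteq> {0..<length ps} \<and> bad_index_set op ps rel N S}"
proof -
  have weights_set: "weights ps (set I) = mset (map (\<lambda>i. snd (ps ! i)) I)"
    if "I \<in> set (subseqs [0..<length ps])" for I
    using that subseqs_distinctD by (fastforce simp: weights_def mset_set_set)
  have subseqs: "set ` set (subseqs [0..<length ps]) = Pow {0..<length ps}"
    by (simp add: subseqs_powset)
  show ?thesis
  proof (intro equalityI subsetI)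
    fix S assume "S \<in> set ` set (bad_sets op ps rel N)"
    then show "S \<in> {S. S \<subseteq> {0..<length ps} \<and> bad_index_set op ps rel N S}"
      using subseqs weights_set by (auto simp: bad_sets_def bad_index_set_def)
  next
    fix S assume S: "S \<in> {S. S \<subseteq> {0..<length ps} \<and> bad_index_set op ps rel N S}"
    then obtain I where I: "I \<in> set (subseqs [0..<length ps])" "set I = S"
      using subseqs by (metis (no_types, lifting) PowI imageE mem_Collect_eq)
    then show "S \<in> set ` set (bad_sets op ps rel N)"
      using S weights_set[OF I(1)] by (auto simp: bad_sets_def bad_index_set_def)
  qed
qed

lemma ball_bad_sets:
  "(\<forall>I\<in>set (bad_sets op ps rel N). Q (set I)) \<longleftrightarrow>
     (\<forall>S \<subseteq> {0..<length ps}. bad_index_set op ps rel N S \<longrightarrow> Q S)"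
proof -
  have "(\<forall>I\<in>set (bad_sets op ps rel N). Q (set I)) \<longleftrightarrow> (\<forall>S\<in>set ` set (bad_sets op ps rel N). Q S)"
    by simp
  also have "\<dots> \<longleftrightarrow> (\<forall>S \<subseteq> {0..<length ps}. bad_index_set op ps rel N S \<longrightarrow> Q S)"
    unfolding set_bad_sets by blast
  finally show ?thesis .
qed

lemma bad_sets_subset: "I \<in> set (bad_sets op ps rel N) \<Longrightarrow> set I \<subseteq> {0..<length ps}"
  using set_bad_sets[of op ps rel N] by blast

lemma bad_index_set_downward_closed:
  assumes "agg_monotone op ps rel N" "T \<subseteq> S" "S \<subseteq> {0..<length ps}"
    and "bad_index_set op ps rel N S"
  shows "bad_index_set op ps rel N T"
proof -
  have "weights ps S \<subseteq># mset (map snd ps)"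
    using weights_mono[OF assms(3), of ps] unfolding weights_all_indices by simp
  moreover have "weights ps T \<subseteq># weights ps S"
    using assms(2,3) finite_subset by (blast intro: weights_mono)
  ultimately show ?thesis
    using assms(1,4) unfolding agg_monotone_def bad_index_set_def by blast
qed

lemma bad_index_set_upward_closed:
  assumes "agg_antimonotone op ps rel N" "S \<subseteq> T" "T \<subseteq> {0..<length ps}"
    and "bad_index_set op ps rel N S"
  shows "bad_index_set op ps rel N T"
proof -
  have "weights ps T \<subseteq># mset (map snd ps)"
    using weights_mono[OF assms(3), of ps] unfolding weights_all_indices by simp
  moreover have "weights ps S \<subseteq># weights ps T"
    using assms(2,3) finite_subset by (blast intro: weights_mono)
  ultimately show ?thesis
    using assms(1,4) unfolding agg_antimonotone_def bad_index_set_def by blast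
qed

lemma sat_reduct_G_formula:
  "sat Y (reduct X (G_formula op ps rel N)) \<longleftrightarrow>
     \<not> bad_index_set op ps rel N (true_indices (sat X) ps) \<and>
     \<not> bad_index_set op ps rel N (true_indices (\<lambda>F. sat Y (reduct X F)) ps)"
    (is "_ \<longleftrightarrow> ?rhs")
proof -
  let ?TX = "true_indices (sat X) ps" and ?TY = "true_indices (\<lambda>F. sat Y (reduct X F)) ps"
  have clause:
    "sat Y (reduct X (Imp (conj_in ps I) (disj_out ps I))) \<longleftrightarrow> set I \<noteq> ?TX \<and> set I \<noteq> ?TY"
    if "set I \<subseteq> {0..<length ps}" for I
    using that by (simp add: sat_conj_in sat_reduct_conj_in sat_disj_out sat_reduct_disj_out) blast
  have "sat Y (reduct X (G_formula op ps rel N)) \<longleftrightarrow>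
      (\<forall>I\<in>set (bad_sets op ps rel N). sat Y (reduct X (Imp (conj_in ps I) (disj_out ps I))))"
    unfolding G_formula_def sat_reduct_Conj set_map ball_simps ..
  also have "\<dots> \<longleftrightarrow> (\<forall>I\<in>set (bad_sets op ps rel N). set I \<noteq> ?TX \<and> set I \<noteq> ?TY)"
    by (rule ball_cong[OF refl], rule clause[OF bad_sets_subset])
  also have "\<dots> \<longleftrightarrow> (\<forall>S \<subseteq> {0..<length ps}. bad_index_set op ps rel N S \<longrightarrow> S \<noteq> ?TX \<and> S \<noteq> ?TY)"
    by (rule ball_bad_sets)
  also have "\<dots> \<longleftrightarrow> ?rhs"
    using true_indices_subset by blast
  finally show ?thesis .
qed

lemma sat_reduct_G_mono:
  "sat Y (reduct X (G_mono op ps rel N)) \<longleftrightarrow>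
     (\<forall>S \<subseteq> {0..<length ps}. bad_index_set op ps rel N S \<longrightarrow>
        \<not> true_indices (\<lambda>F. sat Y (reduct X F)) ps \<subseteq> S)"
    (is "_ \<longleftrightarrow> ?rhs")
proof -
  have "sat Y (reduct X (G_mono op ps rel N)) \<longleftrightarrow>
      (\<forall>I\<in>set (bad_sets op ps rel N). \<not> true_indices (\<lambda>F. sat Y (reduct X F)) ps \<subseteq> set I)"
    unfolding G_mono_def sat_reduct_Conj set_map ball_simps sat_reduct_disj_out ..
  also have "\<dots> \<longleftrightarrow> ?rhs"
    by (rule ball_bad_sets)
  finally show ?thesis .
qed

lemma sat_reduct_G_anti:
  "sat Y (reduct X (G_anti op ps rel N)) \<longleftrightarrow>
     (\<forall>S \<subseteq> {0..<length ps}. bad_index_set op ps rel N S \<longrightarrow>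
        \<not> S \<subseteq> true_indices (sat X) ps \<and> \<not> S \<subseteq> true_indices (\<lambda>F. sat Y (reduct X F)) ps)"
    (is "_ \<longleftrightarrow> ?rhs")
proof -
  let ?TX = "true_indices (sat X) ps" and ?TY = "true_indices (\<lambda>F. sat Y (reduct X F)) ps"
  have clause: "sat Y (reduct X (Neg (conj_in ps I))) \<longleftrightarrow> \<not> set I \<subseteq> ?TX \<and> \<not> set I \<subseteq> ?TY"
    if "set I \<subseteq> {0..<length ps}" for I
    using that by (simp add: Neg_def sat_conj_in sat_reduct_conj_in)
  have "sat Y (reduct X (G_anti op ps rel N)) \<longleftrightarrow>
      (\<forall>I\<in>set (bad_sets op ps rel N). sat Y (reduct X (Neg (conj_in ps I))))"
    unfolding G_anti_def sat_reduct_Conj set_map ball_simps ..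
  also have "\<dots> \<longleftrightarrow> (\<forall>I\<in>set (bad_sets op ps rel N). \<not> set I \<subseteq> ?TX \<and> \<not> set I \<subseteq> ?TY)"
    by (rule ball_cong[OF refl], rule clause[OF bad_sets_subset])
  also have "\<dots> \<longleftrightarrow> ?rhs"
    by (rule ball_bad_sets)
  finally show ?thesis .
qed

lemma sat_reduct_G_formula_iff_G_mono:
  assumes "agg_monotone op ps rel N"
  shows "sat Y (reduct X (G_formula op ps rel N)) \<longleftrightarrow> sat Y (reduct X (G_mono op ps rel N))"
proof -
  let ?bad = "bad_index_set op ps rel N"
  let ?TX = "true_indices (sat X) ps" and ?TY = "true_indices (\<lambda>F. sat Y (reduct X F)) ps"
  note down = bad_index_set_downward_closed[OF assms]
  have "sat Y (reduct X (G_formula op ps rel N)) \<longleftrightarrow> \<not> ?bad ?TX \<and> \<not> ?bad ?TY"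
    by (rule sat_reduct_G_formula)
  also have "\<dots> \<longleftrightarrow> \<not> ?bad ?TY"
    using down[OF true_indices_reduct_subset true_indices_subset] by blast
  also have "\<dots> \<longleftrightarrow> (\<forall>S \<subseteq> {0..<length ps}. ?bad S \<longrightarrow> \<not> ?TY \<subseteq> S)"
    by (rule downward_closed_family_not_iff[OF down true_indices_subset])
  also have "\<dots> \<longleftrightarrow> sat Y (reduct X (G_mono op ps rel N))"
    by (rule sat_reduct_G_mono[symmetric])
  finally show ?thesis .
qed

lemma sat_reduct_G_formula_iff_G_anti:
  assumes "agg_antimonotone op ps rel N"
  shows "sat Y (reduct X (G_formula op ps rel N)) \<longleftrightarrow> sat Y (reduct X (G_anti op ps rel N))"
proof -
  let ?bad = "bad_index_set op ps rel N" and ?U = "{0..<length ps}"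
  let ?TX = "true_indices (sat X) ps" and ?TY = "true_indices (\<lambda>F. sat Y (reduct X F)) ps"
  note up = bad_index_set_upward_closed[OF assms]
  have "sat Y (reduct X (G_formula op ps rel N)) \<longleftrightarrow> \<not> ?bad ?TX \<and> \<not> ?bad ?TY"
    by (rule sat_reduct_G_formula)
  also have "\<dots> \<longleftrightarrow> (\<forall>S \<subseteq> ?U. ?bad S \<longrightarrow> \<not> S \<subseteq> ?TX) \<and> (\<forall>S \<subseteq> ?U. ?bad S \<longrightarrow> \<not> S \<subseteq> ?TY)"
    by (intro arg_cong2[where f = "(\<and>)"] upward_closed_family_not_iff[OF up true_indices_subset])
  also have "\<dots> \<longleftrightarrow> sat Y (reduct X (G_anti op ps rel N))"
    unfolding sat_reduct_G_anti by blast
  finally show ?thesis .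
qed

theorem proposition13:
  fixes op :: "real multiset \<Rightarrow> ereal" and ps :: "('a fml \<times> real) list"
    and rel :: "ereal \<Rightarrow> ereal \<Rightarrow> bool" and N :: real
  shows "(agg_monotone op ps rel N \<longrightarrow>
            strongly_equivalent (G_formula op ps rel N) (G_mono op ps rel N))
       \<and> (agg_antimonotone op ps rel N \<longrightarrow>
            strongly_equivalent (G_formula op ps rel N) (G_anti op ps rel N))"
  by (intro conjI impI strongly_equivalentI
      sat_reduct_G_formula_iff_G_mono sat_reduct_G_formula_iff_G_anti)

end
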